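(* Let $q,r,\nu$ be positive integers. The subspace of vectors $x\in\mathbb{C}^{\nu r}$ (not depending on $z$) with $\mathcal{M}^0(z)x=0$ for all $z$, i.e. $\bigcap_z\ker\mathcal{M}^0(z)$, has dimension $(\nu-q)^+r$. This subspace equals the kernel of $\mathcal{M}(z)$ for $\mu=r$, which is the same for all $z$.
   Context: Matrix indices start at $0$. $u(z)=(1,\dots,z^{q-1})^\top$, $w(z)=(1,\dots,z^{r-1})$, $M(z)=u(z)w(z)$. $\mathcal{M}^0(z)=(M(z),M'(z),\dots,M^{(\nu-1)}(z))\in\mathbb{C}^{q\times\nu r}$, and, for a positive integer $\mu$, $\mathcal{M}(z)\in\mathbb{C}^{\mu q\times\nu r}$ is the block matrix with $(i,j)$ block $M^{(i+j)}(z)$, $i=0,\dots,\mu-1$, $j=0,\dots,\nu-1$. *)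

theory Defs
  imports "HOL-Analysis.Analysis" "Jordan_Normal_Form.Matrix_Kernel"
begin

definition uvec :: "nat \<Rightarrow> complex \<Rightarrow> complex mat" where
  "uvec q z = mat q 1 (\<lambda>(i,j). z ^ i)"

definition wvec :: "nat \<Rightarrow> complex \<Rightarrow> complex mat" where
  "wvec r z = mat 1 r (\<lambda>(i,j). z ^ j)"

definition Mmat :: "nat \<Rightarrow> nat \<Rightarrow> complex \<Rightarrow> complex mat" where
  "Mmat q r z = uvec q z * wvec r z"

definition Mder :: "nat \<Rightarrow> nat \<Rightarrow> nat \<Rightarrow> complex \<Rightarrow> complex mat" where
  "Mder q r k z = mat q r (\<lambda>(i,j). (deriv ^^ k) (\<lambda>w. Mmat q r w $$ (i,j)) z)"

(* M^0(z) = (M(z), M'(z), ..., M^(nu-1)(z)), a q x (nu*r) matrix *)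
definition M0mat :: "nat \<Rightarrow> nat \<Rightarrow> nat \<Rightarrow> complex \<Rightarrow> complex mat" where
  "M0mat q r \<nu> z = mat q (\<nu> * r) (\<lambda>(i,c). Mder q r (c div r) z $$ (i, c mod r))"

(* calligraphic M(z): (mu*q) x (nu*r) block matrix with (i,j) block M^(i+j)(z) *)
definition Mcal :: "nat \<Rightarrow> nat \<Rightarrow> nat \<Rightarrow> nat \<Rightarrow> complex \<Rightarrow> complex mat" where
  "Mcal q r \<mu> \<nu> z = mat (\<mu> * q) (\<nu> * r)
     (\<lambda>(a,c). Mder q r (a div q + c div r) z $$ (a mod q, c mod r))"

definition common_kernel :: "nat \<Rightarrow> nat \<Rightarrow> nat \<Rightarrow> complex vec set" where
  "common_kernel q r \<nu> = (\<Inter>z. mat_kernel (M0mat q r \<nu> z))"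

definition subspace_dim :: "nat \<Rightarrow> complex vec set \<Rightarrow> nat" where
  "subspace_dim n W = vectorspace.dim class_ring ((module_vec TYPE(complex) n)\<lparr>carrier := W\<rparr>)"

end

theory Submission
  imports Defs
begin

text \<open>
  The entry of $M^0(z)$ in row $i$ and column $c = kr + j$ is the $k$-th derivative of $z^{i+j}$,
  so the $i$-th entry of $M^0(z)x$ is the value at $z$ of the polynomial
  $H_{i,0} = \sum_c x_c D^k X^{i+j}$, and the entries of $\mathcal{M}(z)x$ are the values at $z$
  of the $D^a H_{i,0}$, $a < \mu$. Leibniz' rule for $D^k(Xf)$ produces polynomials
  $H_{i,s} = \sum_c x_c \binom{k}{s} D^{k-s} X^{i+j}$ with
  $H_{i+1,s} = X H_{i,s} + (s+1) H_{i,s+1}$, so an ideal contains all $H_{i,0}$, $i < q$,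
  iff it contains all $H_{0,s}$, $s < q$. For the zero ideal this describes the common kernel
  by $H_{0,s} = 0$; for the ideal generated by $(X-z)^\mu$ it describes $\ker \mathcal{M}(z)$,
  and the two conditions agree because $\deg H_{0,s} < r \le \mu$. Finally, the coefficients of
  the $H_{0,s}$ with $s < \min(q,\nu)$ (the others vanish) are $\min(q,\nu)\,r$ linear forms
  in $x$ with a unitriangular matrix, which gives the dimension
  $\nu r - \min(q,\nu)\,r = (\nu-q)^+ r$.
\<close>

lemma higher_pderiv_X_mult:
  fixes f :: "'a::idom poly"
  shows "(pderiv ^^ n) (monom 1 1 * f)
    = monom 1 1 * (pderiv ^^ n) f + Polynomial.smult (of_nat n) ((pderiv ^^ (n - 1)) f)"
proof (induction n)
  case 0
  then show ?case by simp
next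
  case (Suc n)
  have "(pderiv ^^ Suc n) (monom 1 1 * f)
      = pderiv (monom 1 1 * (pderiv ^^ n) f) + Polynomial.smult (of_nat n) (pderiv ((pderiv ^^ (n - 1)) f))"
    using Suc by (simp add: pderiv_add pderiv_smult)
  also have "pderiv ((pderiv ^^ (n - 1)) f) = (if n = 0 then pderiv f else (pderiv ^^ n) f)"
    by (cases n) simp_all
  also have "pderiv (monom 1 1 * (pderiv ^^ n) f) = monom 1 1 * (pderiv ^^ Suc n) f + (pderiv ^^ n) f"
    by (simp add: pderiv_mult pderiv_monom)
  finally show ?case
    by (cases n) (simp_all del: funpow.simps add: smult_add_left add.assoc numeral_mult_conv_smult)
qed

lemma higher_pderiv_X_mult_binomial:
  fixes a :: "'a::idom"
  shows "Polynomial.smult (a * of_nat (k choose s)) ((pderiv ^^ (k - s)) (monom 1 1 * p))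
    = monom 1 1 * Polynomial.smult (a * of_nat (k choose s)) ((pderiv ^^ (k - s)) p)
      + Polynomial.smult (of_nat (Suc s))
          (Polynomial.smult (a * of_nat (k choose Suc s)) ((pderiv ^^ (k - Suc s)) p))"
proof -
  have nat_binomial: "(k choose s) * (k - s) = Suc s * (k choose Suc s)"
    by (metis binomial_absorb_comp binomial_absorption mult.commute)
  have binomial: "(of_nat (k choose s) * of_nat (k - s) :: 'a)
      = of_nat (Suc s) * of_nat (k choose Suc s)"
    by (simp only: of_nat_mult[symmetric] nat_binomial)
  have "k - s - 1 = k - Suc s" by simp
  then show ?thesis
    unfolding higher_pderiv_X_mult
    by (simp add: smult_add_right mult.assoc binomial mult.left_commute[of a])
qed

lemma smult_sum_right: "Polynomial.smult a (sum f S) = (\<Sum>x\<in>S. Polynomial.smult a (f x))"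
  by (induction S rule: infinite_finite_induct) (simp_all add: smult_add_right)

lemma degree_smult_higher_pderiv_monom_le:
  fixes a :: "'a::{idom, semiring_char_0}"
  shows "Polynomial.degree (Polynomial.smult a ((pderiv ^^ n) (monom 1 m))) \<le> m"
proof -
  have "Polynomial.degree (Polynomial.smult a ((pderiv ^^ n) (monom 1 m)))
      \<le> Polynomial.degree ((pderiv ^^ n) (monom (1::'a) m))"
    by (rule degree_smult_le)
  also have "\<dots> \<le> Polynomial.degree (monom (1::'a) m)"
    by (simp add: degree_higher_pderiv)
  also have "\<dots> \<le> m"
    by (rule degree_monom_le)
  finally show ?thesis .
qed

lemma higher_deriv_poly:
  fixes p :: "'a::real_normed_field poly"
  shows "(deriv ^^ k) (poly p) = poly ((pderiv ^^ k) p)"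
proof (induction k)
  case (Suc k)
  have "(deriv ^^ Suc k) (poly p) = deriv (poly ((pderiv ^^ k) p))"
    using Suc by simp
  also have "\<dots> = poly (pderiv ((pderiv ^^ k) p))"
    by (rule ext, rule DERIV_imp_deriv, rule poly_DERIV)
  finally show ?case by simp
qed simp

lemma higher_pderiv_vanish_iff_dvd:
  fixes f :: "'a::field_char_0 poly"
  shows "(\<forall>k<n. poly ((pderiv ^^ k) f) z = 0) \<longleftrightarrow> [:-z, 1:] ^ n dvd f"
proof (induction n arbitrary: f)
  case 0
  then show ?case by simp
next
  case (Suc n)
  have "(\<forall>k<Suc n. poly ((pderiv ^^ k) f) z = 0) \<longleftrightarrow>
        poly f z = 0 \<and> (\<forall>k<n. poly ((pderiv ^^ k) (pderiv f)) z = 0)"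
    by (auto simp del: funpow.simps simp: funpow_Suc_right less_Suc_eq_0_disj)
  also have "\<dots> \<longleftrightarrow> poly f z = 0 \<and> [:-z, 1:] ^ n dvd pderiv f"
    using Suc by simp
  also have "\<dots> \<longleftrightarrow> [:-z, 1:] ^ Suc n dvd f"
  proof (cases "f = 0")
    case False
    have "poly f z = 0 \<and> n \<le> Polynomial.order z (pderiv f) \<longleftrightarrow> Suc n \<le> Polynomial.order z f"
      using order_pderiv[OF False] order_root[of f z] False by (cases "poly f z = 0") auto
    moreover have "pderiv f \<noteq> 0" if "poly f z = 0"
      using that False pderiv_iszero[of f] by force
    ultimately show ?thesis
      using False order_divides[of z "Suc n" f] order_divides[of z n "pderiv f"] by blast
  qed simp
  finally show ?case .
qed

lemma linear_power_dvd_low_degree: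
  fixes p :: "'a::field poly"
  assumes "[:-z, 1:] ^ n dvd p" and "Polynomial.degree p < n"
  shows "p = 0"
proof (rule ccontr)
  assume "p \<noteq> 0"
  with assms(1) have "Polynomial.degree ([:-z, 1:] ^ n) \<le> Polynomial.degree p"
    by (rule dvd_imp_degree_le)
  with assms(2) show False
    by (simp add: degree_linear_power)
qed

lemma poly_eq_0_iff_low_coeffs:
  assumes "Polynomial.degree p < n"
  shows "p = 0 \<longleftrightarrow> (\<forall>j<n. coeff p j = 0)"
proof
  assume low: "\<forall>j<n. coeff p j = 0"
  show "p = 0"
  proof (rule poly_eqI)
    fix j
    show "coeff p j = coeff 0 j"
      using low assms by (cases "j < n") (simp_all add: coeff_eq_0)
  qed
qed simp

lemma dvd_triangular_recurrence_iff:
  fixes H :: "nat \<Rightarrow> nat \<Rightarrow> 'a::field_char_0 poly"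
  assumes H_Suc: "\<And>i s. H (Suc i) s = monom 1 1 * H i s + Polynomial.smult (of_nat (Suc s)) (H i (Suc s))"
  shows "(\<forall>i<q. d dvd H i 0) \<longleftrightarrow> (\<forall>s<q. d dvd H 0 s)"
proof
  assume first_column: "\<forall>i<q. d dvd H i 0"
  have "d dvd H i s" if "i + s < q" for i s
    using that
  proof (induction s arbitrary: i)
    case (Suc s)
    have "H i (Suc s) = Polynomial.smult (inverse (of_nat (Suc s))) (H (Suc i) s - monom 1 1 * H i s)"
      by (simp add: H_Suc del: of_nat_Suc)
    with Suc show ?case
      by (simp add: dvd_diff dvd_smult)
  qed (use first_column in simp)
  then show "\<forall>s<q. d dvd H 0 s" by simp
next
  assume first_row: "\<forall>s<q. d dvd H 0 s"
  have "d dvd H i s" if "i + s < q" for i s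
    using that by (induction i arbitrary: s) (simp_all add: first_row H_Suc dvd_smult)
  then show "\<forall>i<q. d dvd H i 0" by simp
qed

lemma all_less_mult_iff:
  fixes m n :: nat
  shows "(\<forall>k<m * n. P k) \<longleftrightarrow> (\<forall>a<m. \<forall>i<n. P (a * n + i))"
proof safe
  fix a i assume "\<forall>k<m * n. P k" "a < m" "i < n"
  moreover have "Suc a * n \<le> m * n"
    using \<open>a < m\<close> by (intro mult_le_mono1) simp
  ultimately show "P (a * n + i)" by simp
next
  fix k assume "\<forall>a<m. \<forall>i<n. P (a * n + i)" "k < m * n"
  moreover have "k div n < m"
    using less_mult_imp_div_less[OF \<open>k < m * n\<close>] .
  moreover have "k mod n < n"
    using \<open>k < m * n\<close> by (cases "n = 0") simp_all
  ultimately have "P (k div n * n + k mod n)" by blast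
  then show "P k" by simp
qed

lemma mult_mat_vec_eq_0_iff:
  assumes "A \<in> carrier_mat n m" and "x \<in> carrier_vec m"
  shows "A *\<^sub>v x = 0\<^sub>v n \<longleftrightarrow> (\<forall>i<n. (A *\<^sub>v x) $ i = 0)"
proof
  assume "\<forall>i<n. (A *\<^sub>v x) $ i = 0"
  then show "A *\<^sub>v x = 0\<^sub>v n"
    using assms(1) by (intro eq_vecI) auto
qed simp

lemma kernel_dim_identity_block:
  fixes A :: "'a::field mat"
  assumes A: "A \<in> carrier_mat n m" and "n \<le> m"
    and identity: "\<And>i j. i < n \<Longrightarrow> j < n \<Longrightarrow> A $$ (i, j) = (if i = j then 1 else 0)"
  shows "kernel.dim m A = m - n"
proof -
  have "pivot_fun A (\<lambda>i. i) m"
    using A \<open>n \<le> m\<close> by (intro pivot_funI) (auto simp: identity)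
  then have "row_echelon_form A"
    using A unfolding row_echelon_form_def by auto
  moreover have "{i. i < n \<and> row A i \<noteq> 0\<^sub>v m} = {..<n}"
  proof -
    have "row A i \<noteq> 0\<^sub>v m" if "i < n" for i
    proof
      assume "row A i = 0\<^sub>v m"
      then have "row A i $ i = 0"
        using that \<open>n \<le> m\<close> by simp
      with A that \<open>n \<le> m\<close> show False
        by (simp add: identity)
    qed
    then show ?thesis by auto
  qed
  ultimately show ?thesis
    using find_base_vectors(6)[OF _ A] by simp
qed

lemma kernel_dim_unitriangular:
  fixes A :: "'a::field mat"
  assumes A: "A \<in> carrier_mat n m" and "n \<le> m"
    and diag: "\<And>i. i < n \<Longrightarrow> A $$ (i, i) = 1"
    and lower: "\<And>i j. i < n \<Longrightarrow> j < i \<Longrightarrow> A $$ (i, j) = 0"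
  shows "kernel.dim m A = m - n"
proof -
  define U where "U = mat n n (\<lambda>(i, j). A $$ (i, j))"
  have U: "U \<in> carrier_mat n n"
    by (simp add: U_def)
  have "det U = prod_list (diag_mat U)"
    using U by (intro det_upper_triangular) (auto simp: U_def upper_triangular_def lower)
  also have "\<dots> = 1"
    using U by (simp add: prod_list_diag_prod U_def diag)
  finally obtain P where P: "P \<in> carrier_mat n n" and "P * U = 1\<^sub>m n" and "U * P = 1\<^sub>m n"
    using det_non_zero_imp_unit[OF U, unfolded Units_def, of "()"] by (auto simp: ring_mat_def)
  have "mat_kernel (P * A) = mat_kernel A"
    by (rule mat_kernel_mult_eq[OF A P U \<open>U * P = 1\<^sub>m n\<close>])
  moreover have "kernel.dim m (P * A) = m - n"
  proof (rule kernel_dim_identity_block[OF _ \<open>n \<le> m\<close>])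
    show "P * A \<in> carrier_mat n m" using P A by simp
    fix i j assume "i < n" "j < n"
    moreover have "col A j = col U j"
      using A U \<open>j < n\<close> \<open>n \<le> m\<close> by (intro eq_vecI) (auto simp: U_def)
    ultimately have "(P * A) $$ (i, j) = (P * U) $$ (i, j)"
      using P A U \<open>n \<le> m\<close> by simp
    then show "(P * A) $$ (i, j) = (if i = j then 1 else 0)"
      using \<open>P * U = 1\<^sub>m n\<close> \<open>i < n\<close> \<open>j < n\<close> by simp
  qed
  ultimately show ?thesis by simp
qed

text \<open>The polynomial $H_{i,s}$; coordinate $c$ of $x$ belongs to derivative order
  \<open>c div r\<close> and exponent \<open>c mod r\<close>.\<close>

definition leibniz_poly :: "nat \<Rightarrow> 'a::idom vec \<Rightarrow> nat \<Rightarrow> nat \<Rightarrow> 'a poly" where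
  "leibniz_poly r x i s = (\<Sum>c<dim_vec x. Polynomial.smult (x $ c * of_nat (c div r choose s))
      ((pderiv ^^ (c div r - s)) (monom 1 (i + c mod r))))"

lemma leibniz_poly_Suc:
  fixes x :: "'a::idom vec"
  shows "leibniz_poly r x (Suc i) s
    = monom 1 1 * leibniz_poly r x i s + Polynomial.smult (of_nat (Suc s)) (leibniz_poly r x i (Suc s))"
proof -
  have "monom 1 (Suc i + m) = (monom 1 1 * monom 1 (i + m) :: 'a poly)" for m
    by (simp add: mult_monom)
  then show ?thesis
    unfolding leibniz_poly_def
    by (simp only: higher_pderiv_X_mult_binomial)
       (simp add: sum.distrib sum_distrib_left smult_sum_right)
qed

lemma degree_leibniz_poly_0:
  fixes x :: "'a::{idom, semiring_char_0} vec"
  assumes "r > 0"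
  shows "Polynomial.degree (leibniz_poly r x 0 s) < r"
proof -
  have term_degree: "Polynomial.degree (Polynomial.smult a ((pderiv ^^ n) (monom 1 (0 + c mod r)))) \<le> r - 1"
    for a :: 'a and n c
    using degree_smult_higher_pderiv_monom_le[of a n "0 + c mod r"] mod_less_divisor[OF assms, of c]
    by linarith
  have "Polynomial.degree (leibniz_poly r x 0 s) \<le> r - 1"
    unfolding leibniz_poly_def by (intro degree_sum_le term_degree) simp
  with assms show ?thesis by linarith
qed

lemma leibniz_poly_0_eq_0:
  fixes x :: "'a::idom vec"
  assumes x: "x \<in> carrier_vec (\<nu> * r)" and "\<nu> \<le> s"
  shows "leibniz_poly r x 0 s = 0"
proof -
  have "c div r < s" if "c < \<nu> * r" for c
    using less_mult_imp_div_less[OF that] \<open>\<nu> \<le> s\<close> by linarith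
  with x show ?thesis
    unfolding leibniz_poly_def by (intro sum.neutral) (auto simp: binomial_eq_0)
qed

lemma Mder_index:
  assumes "i < q" and "j < r"
  shows "Mder q r k z $$ (i, j) = poly ((pderiv ^^ k) (monom 1 (i + j))) z"
proof -
  have "(\<lambda>w. Mmat q r w $$ (i, j)) = poly (monom 1 (i + j))"
    using assms by (auto simp: Mmat_def uvec_def wvec_def scalar_prod_def poly_monom power_add)
  with assms show ?thesis
    by (simp add: Mder_def higher_deriv_poly)
qed

lemma M0mat_carrier: "M0mat q r \<nu> z \<in> carrier_mat q (\<nu> * r)"
  by (simp add: M0mat_def)

lemma Mcal_carrier: "Mcal q r \<mu> \<nu> z \<in> carrier_mat (\<mu> * q) (\<nu> * r)"
  by (simp add: Mcal_def)

lemma M0mat_mult_vec_index: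
  assumes x: "x \<in> carrier_vec (\<nu> * r)" and i: "i < q"
  shows "(M0mat q r \<nu> z *\<^sub>v x) $ i = poly (leibniz_poly r x i 0) z"
proof -
  have "(M0mat q r \<nu> z *\<^sub>v x) $ i = (\<Sum>c<\<nu> * r. M0mat q r \<nu> z $$ (i, c) * x $ c)"
    using x i by (simp add: M0mat_def scalar_prod_def lessThan_atLeast0)
  also have "\<dots> = (\<Sum>c<\<nu> * r. x $ c * poly ((pderiv ^^ (c div r)) (monom 1 (i + c mod r))) z)"
  proof (intro sum.cong refl)
    fix c assume "c \<in> {..<\<nu> * r}"
    then have "c mod r < r" by (cases "r = 0") auto
    with i show "M0mat q r \<nu> z $$ (i, c) * x $ c
        = x $ c * poly ((pderiv ^^ (c div r)) (monom 1 (i + c mod r))) z"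
      using \<open>c \<in> {..<\<nu> * r}\<close> by (simp add: M0mat_def Mder_index)
  qed
  also have "\<dots> = poly (leibniz_poly r x i 0) z"
    using x by (simp add: leibniz_poly_def poly_sum)
  finally show ?thesis .
qed

lemma Mcal_mult_vec_index:
  assumes x: "x \<in> carrier_vec (\<nu> * r)" and i: "i < q" and a: "a < \<mu>"
  shows "(Mcal q r \<mu> \<nu> z *\<^sub>v x) $ (a * q + i) = poly ((pderiv ^^ a) (leibniz_poly r x i 0)) z"
proof -
  have "Suc a * q \<le> \<mu> * q"
    using a by (intro mult_le_mono1) simp
  with i have row: "a * q + i < \<mu> * q"
    by simp
  have row_div: "(a * q + i) div q = a" "(a * q + i) mod q = i"
    using i by auto
  have "(Mcal q r \<mu> \<nu> z *\<^sub>v x) $ (a * q + i) = (\<Sum>c<\<nu> * r. Mcal q r \<mu> \<nu> z $$ (a * q + i, c) * x $ c)"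
    using x row by (simp add: Mcal_def scalar_prod_def lessThan_atLeast0)
  also have "\<dots> = (\<Sum>c<\<nu> * r. x $ c * poly ((pderiv ^^ (a + c div r)) (monom 1 (i + c mod r))) z)"
  proof (intro sum.cong refl)
    fix c assume "c \<in> {..<\<nu> * r}"
    then have "c mod r < r" by (cases "r = 0") auto
    with i row show "Mcal q r \<mu> \<nu> z $$ (a * q + i, c) * x $ c
        = x $ c * poly ((pderiv ^^ (a + c div r)) (monom 1 (i + c mod r))) z"
      using \<open>c \<in> {..<\<nu> * r}\<close> by (simp add: Mcal_def Mder_index row_div)
  qed
  also have "\<dots> = poly ((pderiv ^^ a) (leibniz_poly r x i 0)) z"
    using x unfolding leibniz_poly_def higher_pderiv_sum higher_pderiv_smult poly_sum
    by (simp add: mult.commute funpow_add)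
  finally show ?thesis .
qed

lemma common_kernel_eq:
  "common_kernel q r \<nu> = {x \<in> carrier_vec (\<nu> * r). \<forall>i<q. leibniz_poly r x i 0 = 0}"
proof -
  have kernel_iff: "x \<in> mat_kernel (M0mat q r \<nu> z) \<longleftrightarrow>
      x \<in> carrier_vec (\<nu> * r) \<and> (\<forall>i<q. poly (leibniz_poly r x i 0) z = 0)" for x z
    unfolding mat_kernel[OF M0mat_carrier]
    by (auto simp: mult_mat_vec_eq_0_iff[OF M0mat_carrier] M0mat_mult_vec_index)
  have "x \<in> common_kernel q r \<nu> \<longleftrightarrow>
      x \<in> carrier_vec (\<nu> * r) \<and> (\<forall>i<q. \<forall>z. poly (leibniz_poly r x i 0) z = 0)" for x
    unfolding common_kernel_def by (auto simp: kernel_iff)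
  then show ?thesis
    by (simp add: poly_all_0_iff_0 set_eq_iff)
qed

lemma Mcal_kernel_eq:
  "mat_kernel (Mcal q r \<mu> \<nu> z)
    = {x \<in> carrier_vec (\<nu> * r). \<forall>i<q. [:-z, 1:] ^ \<mu> dvd leibniz_poly r x i 0}"
proof -
  have "x \<in> mat_kernel (Mcal q r \<mu> \<nu> z) \<longleftrightarrow>
      x \<in> carrier_vec (\<nu> * r) \<and> (\<forall>i<q. \<forall>a<\<mu>. poly ((pderiv ^^ a) (leibniz_poly r x i 0)) z = 0)" for x
    unfolding mat_kernel[OF Mcal_carrier]
    by (auto simp: mult_mat_vec_eq_0_iff[OF Mcal_carrier] all_less_mult_iff Mcal_mult_vec_index)
  then show ?thesis
    by (simp add: higher_pderiv_vanish_iff_dvd set_eq_iff)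
qed

lemma common_kernel_eq_first_row:
  "common_kernel q r \<nu> = {x \<in> carrier_vec (\<nu> * r). \<forall>s<q. leibniz_poly r x 0 s = 0}"
proof -
  have "(\<forall>i<q. leibniz_poly r x i 0 = 0) \<longleftrightarrow> (\<forall>s<q. leibniz_poly r x 0 s = 0)" for x :: "complex vec"
    using dvd_triangular_recurrence_iff[where H = "leibniz_poly r x" and d = 0, OF leibniz_poly_Suc]
    by simp
  then show ?thesis
    by (simp add: common_kernel_eq)
qed

lemma Mcal_kernel_eq_common_kernel:
  assumes "r > 0" and "r \<le> \<mu>"
  shows "mat_kernel (Mcal q r \<mu> \<nu> z) = common_kernel q r \<nu>"
proof -
  have "[:-z, 1:] ^ \<mu> dvd leibniz_poly r x 0 s \<longleftrightarrow> leibniz_poly r x 0 s = 0" for x s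
  proof
    assume "[:-z, 1:] ^ \<mu> dvd leibniz_poly r x 0 s"
    moreover have "Polynomial.degree (leibniz_poly r x 0 s) < \<mu>"
      using degree_leibniz_poly_0[OF assms(1), of x s] assms(2) by linarith
    ultimately show "leibniz_poly r x 0 s = 0"
      by (rule linear_power_dvd_low_degree)
  qed simp
  moreover have "(\<forall>i<q. [:-z, 1:] ^ \<mu> dvd leibniz_poly r x i 0)
      \<longleftrightarrow> (\<forall>s<q. [:-z, 1:] ^ \<mu> dvd leibniz_poly r x 0 s)" for x
    by (rule dvd_triangular_recurrence_iff[where H = "leibniz_poly r x", OF leibniz_poly_Suc])
  ultimately show ?thesis
    unfolding Mcal_kernel_eq common_kernel_eq_first_row by simp
qed

definition leibniz_coeff_mat :: "nat \<Rightarrow> nat \<Rightarrow> nat \<Rightarrow> 'a::idom mat" where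
  "leibniz_coeff_mat r m n = mat (m * r) (n * r) (\<lambda>(a, c).
     of_nat (c div r choose a div r) * coeff ((pderiv ^^ (c div r - a div r)) (monom 1 (c mod r))) (a mod r))"

lemma leibniz_coeff_mat_carrier: "leibniz_coeff_mat r m n \<in> carrier_mat (m * r) (n * r)"
  by (simp add: leibniz_coeff_mat_def)

lemma leibniz_coeff_mat_mult_vec_index:
  assumes x: "x \<in> carrier_vec (n * r)" and a: "a < m * r"
  shows "(leibniz_coeff_mat r m n *\<^sub>v x) $ a = coeff (leibniz_poly r x 0 (a div r)) (a mod r)"
proof -
  have "(leibniz_coeff_mat r m n *\<^sub>v x) $ a = (\<Sum>c<n * r. leibniz_coeff_mat r m n $$ (a, c) * x $ c)"
    using x a by (simp add: leibniz_coeff_mat_def scalar_prod_def lessThan_atLeast0)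
  also have "\<dots> = coeff (leibniz_poly r x 0 (a div r)) (a mod r)"
    using x a by (simp add: leibniz_coeff_mat_def leibniz_poly_def coeff_sum mult_ac)
  finally show ?thesis .
qed

lemma leibniz_coeff_mat_diag:
  assumes "a < m * r" and "m \<le> n"
  shows "leibniz_coeff_mat r m n $$ (a, a) = 1"
proof -
  have "a < n * r"
    using assms by (meson less_le_trans mult_le_mono1)
  with assms show ?thesis
    by (simp add: leibniz_coeff_mat_def coeff_monom)
qed

lemma leibniz_coeff_mat_lower:
  assumes "a < m * r" and "m \<le> n" and "c < a"
  shows "leibniz_coeff_mat r m n $$ (a, c) = 0"
proof -
  have "c < n * r"
    using assms by (meson less_trans less_le_trans mult_le_mono1)
  have "c div r \<le> a div r"
    using \<open>c < a\<close> by (simp add: div_le_mono)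
  then consider "c div r < a div r" | "c div r = a div r" "c mod r \<noteq> a mod r"
    using \<open>c < a\<close> by (metis div_mult_mod_eq le_neq_implies_less less_irrefl)
  then show ?thesis
    using assms \<open>c < n * r\<close> by cases (simp_all add: leibniz_coeff_mat_def binomial_eq_0 coeff_monom)
qed

lemma common_kernel_eq_leibniz_coeff_kernel:
  assumes "r > 0"
  shows "common_kernel q r \<nu> = mat_kernel (leibniz_coeff_mat r (min q \<nu>) \<nu>)"
proof -
  let ?A = "leibniz_coeff_mat r (min q \<nu>) \<nu> :: complex mat"
  have "(\<forall>s<q. leibniz_poly r x 0 s = 0) \<longleftrightarrow> ?A *\<^sub>v x = 0\<^sub>v (min q \<nu> * r)"
    if x: "x \<in> carrier_vec (\<nu> * r)" for x
  proof -
    have "(\<forall>s<q. leibniz_poly r x 0 s = 0) \<longleftrightarrow> (\<forall>s<min q \<nu>. leibniz_poly r x 0 s = 0)"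
    proof (intro iffI allI impI)
      fix s assume "\<forall>s<min q \<nu>. leibniz_poly r x 0 s = 0" and "s < q"
      then show "leibniz_poly r x 0 s = 0"
        using leibniz_poly_0_eq_0[OF x, of s] by (cases "\<nu> \<le> s") auto
    qed simp
    also have "\<dots> \<longleftrightarrow> (\<forall>s<min q \<nu>. \<forall>j<r. coeff (leibniz_poly r x 0 s) j = 0)"
      by (simp add: poly_eq_0_iff_low_coeffs[OF degree_leibniz_poly_0[OF assms]])
    also have "\<dots> \<longleftrightarrow> (\<forall>a<min q \<nu> * r. coeff (leibniz_poly r x 0 (a div r)) (a mod r) = 0)"
      using assms by (simp add: all_less_mult_iff)
    also have "\<dots> \<longleftrightarrow> ?A *\<^sub>v x = 0\<^sub>v (min q \<nu> * r)"
      by (simp add: mult_mat_vec_eq_0_iff[OF leibniz_coeff_mat_carrier x] leibniz_coeff_mat_mult_vec_index[OF x])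
    finally show ?thesis .
  qed
  then show ?thesis
    unfolding common_kernel_eq_first_row mat_kernel[OF leibniz_coeff_mat_carrier] by blast
qed

theorem lemma7p3:
  fixes q r \<nu> :: nat
  assumes "q > 0" and "r > 0" and "\<nu> > 0"
  shows "subspace_dim (\<nu> * r) (common_kernel q r \<nu>) = (\<nu> - q) * r
         \<and> (\<forall>z. mat_kernel (Mcal q r r \<nu> z) = common_kernel q r \<nu>)"
proof
  let ?A = "leibniz_coeff_mat r (min q \<nu>) \<nu> :: complex mat"
  have "subspace_dim (\<nu> * r) (common_kernel q r \<nu>) = kernel.dim (\<nu> * r) ?A"
    by (simp add: subspace_dim_def common_kernel_eq_leibniz_coeff_kernel[OF \<open>r > 0\<close>])
  also have "\<dots> = \<nu> * r - min q \<nu> * r"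
    by (intro kernel_dim_unitriangular leibniz_coeff_mat_carrier leibniz_coeff_mat_diag
        leibniz_coeff_mat_lower) (simp_all add: mult_le_mono1)
  also have "\<dots> = (\<nu> - q) * r"
    by (simp add: min_def diff_mult_distrib)
  finally show "subspace_dim (\<nu> * r) (common_kernel q r \<nu>) = (\<nu> - q) * r" .
  show "\<forall>z. mat_kernel (Mcal q r r \<nu> z) = common_kernel q r \<nu>"
    using Mcal_kernel_eq_common_kernel[OF \<open>r > 0\<close> order_refl] by blast
qed

end
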